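(* Let $\mathcal I$ be either the $\sigma$-ideal of meager subsets of $\mathbb R$ or the $\sigma$-ideal of Lebesgue null subsets of $\mathbb R$, let $\mathcal A\subseteq\mathcal I$, and let $P\subseteq\mathbb R$ be an uncountable perfect set. Then $P$ is a tiny set with respect to $\mathcal A$ if and only if for every $t\in\mathbb R$ and every $A\in\mathcal A$ we have $|(P+t)\cap A|\le\omega$.
   Context: For a $\sigma$-ideal $\mathcal I$ on $\mathbb R$ and $\mathcal A\subseteq\mathcal I$, an uncountable perfect set $P\subseteq\mathbb R$ is a tiny set with respect to $\mathcal A$ if (1) for every $t\in\mathbb R$ and every $A\in\mathcal A$, $|(P+t)\cap A|\le\omega$, and (2) for every Borel set $B\notin\mathcal I$ there is $t\in\mathbb R$ with $|(P+t)\cap B|=\mathfrak c$, where $\mathfrak c=|\mathbb R|$. *)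

theory Defs
  imports "HOL-Analysis.Analysis"
begin

definition nowhere_dense :: "real set \<Rightarrow> bool" where
  "nowhere_dense S \<longleftrightarrow> interior (closure S) = {}"

definition meager_sets :: "real set set" where
  "meager_sets = {M. \<exists>F::nat \<Rightarrow> real set. (\<forall>n. nowhere_dense (F n)) \<and> M \<subseteq> (\<Union>n. F n)}"

text \<open>Lebesgue null sets (Lebesgue measure is complete, so this contains all subsets of null sets).\<close>
definition null_ideal :: "real set set" where
  "null_ideal = null_sets lebesgue"

definition perfect_set :: "real set \<Rightarrow> bool" where
  "perfect_set P \<longleftrightarrow> closed P \<and> (\<forall>x\<in>P. x islimpt P)"

definition tiny_set :: "real set set \<Rightarrow> real set set \<Rightarrow> real set \<Rightarrow> bool" where
  "tiny_set I \<A> P \<longleftrightarrow>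
     uncountable P \<and> perfect_set P \<and>
     (\<forall>t::real. \<forall>A\<in>\<A>. countable (((\<lambda>x. x + t) ` P) \<inter> A)) \<and>
     (\<forall>B. B \<in> sets borel \<and> B \<notin> I \<longrightarrow>
        (\<exists>t::real. ((\<lambda>x. x + t) ` P) \<inter> B \<approx> (UNIV :: real set)))"

end

theory Submission
  imports Defs
begin

text \<open>The forward implication is part of the definition of a tiny set. For the converse, let
  \<open>B\<close> be a Borel set outside the ideal; we find \<open>t\<close> such that \<open>P + t\<close> meets \<open>B\<close> in a copy of the
  Cantor space. Build a Cantor scheme of shrinking, pairwise disjoint balls centred in \<open>P\<close>
  (every ball splits in two because \<open>P\<close> has no isolated points) together with a decreasing
  sequence of compact sets \<open>T\<^sub>n\<close> of translations, shrunk at every stage so that all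
  centres of stage \<open>n\<close>, translated by \<open>T\<^sub>n\<close>, stay in a good set. Any \<open>t\<close> in all \<open>T\<^sub>n\<close> then
  moves every branch limit of the scheme into \<open>B\<close>.

  In the measure case \<open>B\<close> contains a compact \<open>K\<close> of positive measure, the \<open>T\<^sub>n\<close> are compact sets
  of positive measure and the good condition is \<open>c + T\<^sub>n \<subseteq> K\<close>: translation is continuous in
  measure, so centres close to the old ones cost only a small part of \<open>T\<^sub>n\<close>. In the category
  case \<open>B\<close> contains a dense \<open>G\<^sub>\<delta>\<close> subset \<open>\<Inter>G\<^sub>n\<close> of a nonempty open set, the \<open>T\<^sub>n\<close> are closed
  balls and the good condition is that the whole ball around the centre, translated by \<open>T\<^sub>n\<close>,
  lies in the dense open set \<open>G\<^sub>n\<close>.\<close>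

section \<open>Cantor trees of balls\<close>

lemma eqpoll_UNIV_if_Cantor_injection:
  fixes f :: "(nat \<Rightarrow> bool) \<Rightarrow> real"
  assumes "inj f" and "range f \<subseteq> S"
  shows "S \<approx> (UNIV :: real set)"
proof (rule lepoll_antisym)
  show "S \<lesssim> (UNIV :: real set)"
    by (simp add: subset_imp_lepoll)
  have "inj (\<lambda>N :: nat set. f (\<lambda>k. k \<in> N))"
    using assms(1) by (auto intro!: injI dest: injD simp: fun_eq_iff)
  then have "(UNIV :: nat set set) \<lesssim> S"
    using assms(2) unfolding lepoll_def by blast
  then show "(UNIV :: real set) \<lesssim> S"
    using nat_sets_eqpoll_reals by (meson eqpoll_sym eqpoll_imp_lepoll lepoll_trans)
qed

definition branch :: "(nat \<Rightarrow> bool) \<Rightarrow> nat \<Rightarrow> bool list" where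
  "branch b n = map b [0..<n]"

lemma length_branch [simp]: "length (branch b n) = n"
  by (simp add: branch_def)

lemma branch_Suc: "branch b (Suc n) = branch b n @ [b n]"
  by (simp add: branch_def)

lemma branch_eq_LEAST_diff:
  assumes "b \<noteq> b'"
  defines "k \<equiv> LEAST k. b k \<noteq> b' k"
  shows "branch b k = branch b' k" and "b k \<noteq> b' k"
proof -
  from assms(1) have ex: "\<exists>k. b k \<noteq> b' k" by (auto simp: fun_eq_iff)
  then show "b k \<noteq> b' k" unfolding k_def by (rule LeastI_ex)
  show "branch b k = branch b' k"
    unfolding branch_def k_def using not_less_Least by fastforce
qed

lemma ball_tree_injection:
  fixes c :: "bool list \<Rightarrow> 'a::complete_space" and r :: "bool list \<Rightarrow> real"
  assumes radius_nonneg: "\<And>s. 0 \<le> r s"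
    and nested: "\<And>s i. cball (c (s @ [i])) (r (s @ [i])) \<subseteq> cball (c s) (r s)"
    and shrinking: "\<And>s i. r (s @ [i]) \<le> inverse (real (Suc (length s)))"
    and disjoint: "\<And>s. cball (c (s @ [True])) (r (s @ [True])) \<inter> cball (c (s @ [False])) (r (s @ [False])) = {}"
  shows "\<exists>f. inj f \<and> (\<forall>b. (\<lambda>n. c (branch b n)) \<longlonglongrightarrow> f b \<and>
                      (\<forall>n. f b \<in> cball (c (branch b n)) (r (branch b n))))"
proof -
  have center_in_ball: "c (branch b m) \<in> cball (c (branch b n)) (r (branch b n))" if "n \<le> m" for b n m
  proof -
    have "cball (c (branch b m)) (r (branch b m)) \<subseteq> cball (c (branch b n)) (r (branch b n))"
      by (rule lift_Suc_antimono_le[of "\<lambda>n. cball (c (branch b n)) (r (branch b n))", OF _ that])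
        (simp add: branch_Suc nested)
    moreover have "c (branch b m) \<in> cball (c (branch b m)) (r (branch b m))"
      using radius_nonneg by simp
    ultimately show ?thesis by blast
  qed
  have "convergent (\<lambda>n. c (branch b n))" for b
  proof (rule Cauchy_convergent, rule metric_CauchyI)
    fix e :: real assume "0 < e"
    then obtain M where M: "inverse (real (Suc M)) < e / 2"
      using reals_Archimedean[of "e / 2"] by auto
    have "dist (c (branch b m)) (c (branch b n)) < e" if "Suc M \<le> m" "Suc M \<le> n" for m n
    proof -
      have "dist (c (branch b m)) (c (branch b n))
          \<le> dist (c (branch b (Suc M))) (c (branch b m)) + dist (c (branch b (Suc M))) (c (branch b n))"
        by (rule dist_triangle3)
      also have "\<dots> \<le> 2 * r (branch b (Suc M))"
        using center_in_ball[of "Suc M" m b] center_in_ball[of "Suc M" n b] that by simp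
      also have "\<dots> < e"
        using shrinking[of "branch b M" "b M"] M by (simp add: branch_Suc)
      finally show ?thesis .
    qed
    then show "\<exists>M. \<forall>m\<ge>M. \<forall>n\<ge>M. dist (c (branch b m)) (c (branch b n)) < e" by blast
  qed
  then obtain f where lim: "\<And>b. (\<lambda>n. c (branch b n)) \<longlonglongrightarrow> f b"
    unfolding convergent_def by metis
  have in_ball: "f b \<in> cball (c (branch b n)) (r (branch b n))" for b n
    by (rule Lim_in_closed_set[OF closed_cball _ _ lim])
      (use center_in_ball in \<open>auto simp: eventually_sequentially\<close>)
  have "inj f"
  proof (rule injI, rule ccontr)
    fix b b' assume "f b = f b'" "b \<noteq> b'"
    then obtain k where "branch b k = branch b' k" "b k \<noteq> b' k"
      using branch_eq_LEAST_diff by blast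
    then show False
      using disjoint[of "branch b k"] in_ball[of b "Suc k"] in_ball[of b' "Suc k"] \<open>f b = f b'\<close>
      by (cases "b k") (auto simp: branch_Suc)
  qed
  with lim in_ball show ?thesis by blast
qed

lemma cball_split_in_two:
  fixes c q :: "'a::metric_space"
  assumes "q \<noteq> c" and "dist q c < r" and "0 < m"
  obtains e where "0 < e" "e \<le> m" "cball q e \<subseteq> cball c r" "cball c e \<subseteq> cball c r"
    "cball q e \<inter> cball c e = {}"
proof -
  define e where "e = min m (min (dist q c / 3) ((r - dist q c) / 2))"
  have "0 < e"
    using assms unfolding e_def by simp
  have "e \<le> m" "e \<le> dist q c / 3" "e \<le> (r - dist q c) / 2"
    unfolding e_def by linarith+
  then have "3 * e \<le> dist q c" "2 * e \<le> r - dist q c"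
    by (simp_all add: field_simps)
  have "cball q e \<subseteq> cball c r"
  proof
    fix x assume "x \<in> cball q e"
    then have "dist c x \<le> dist q c + e"
      using dist_triangle[of c x q] by (simp add: dist_commute)
    then show "x \<in> cball c r"
      using \<open>2 * e \<le> r - dist q c\<close> \<open>0 < e\<close> by simp
  qed
  moreover have "cball c e \<subseteq> cball c r"
    using \<open>2 * e \<le> r - dist q c\<close> \<open>0 < e\<close> zero_le_dist[of q c] by (intro subset_cball) linarith
  moreover have "cball q e \<inter> cball c e = {}"
  proof (rule ccontr)
    assume "cball q e \<inter> cball c e \<noteq> {}"
    then obtain x where "dist q x \<le> e" "dist c x \<le> e"
      by auto
    then have "dist q c \<le> 2 * e"
      using dist_triangle3[of q c x] by (simp add: dist_commute)
    then show False
      using \<open>3 * e \<le> dist q c\<close> \<open>0 < e\<close> by simp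
  qed
  ultimately show ?thesis
    by (rule that[OF \<open>0 < e\<close> \<open>e \<le> m\<close>])
qed

definition ball_tree_refines ::
    "nat \<Rightarrow> (bool list \<Rightarrow> 'a::metric_space) \<Rightarrow> (bool list \<Rightarrow> real) \<Rightarrow> (bool list \<Rightarrow> 'a) \<Rightarrow> (bool list \<Rightarrow> real) \<Rightarrow> bool"
  where "ball_tree_refines n c r c' r' \<longleftrightarrow> (\<forall>s. length s = n \<longrightarrow>
     (\<forall>i. cball (c' (s @ [i])) (r' (s @ [i])) \<subseteq> cball (c s) (r s) \<and> r' (s @ [i]) \<le> inverse (real (Suc n))) \<and>
     cball (c' (s @ [True])) (r' (s @ [True])) \<inter> cball (c' (s @ [False])) (r' (s @ [False])) = {})"

lemma ball_tree_refines_exists: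
  fixes c q :: "bool list \<Rightarrow> 'a::metric_space"
  assumes "\<And>s. length s = n \<Longrightarrow> q s \<noteq> c s \<and> dist (q s) (c s) < r s" and "0 < m"
  obtains c' r' where "ball_tree_refines n c r c' r'"
    "\<And>s i. c' (s @ [i]) = (if i then q s else c s)"
    "\<And>s i. length s = n \<Longrightarrow> 0 < r' (s @ [i]) \<and> r' (s @ [i]) \<le> m"
proof -
  let ?m = "min m (inverse (real (Suc n)))"
  have "\<exists>e. 0 < e \<and> e \<le> ?m \<and> cball (q s) e \<subseteq> cball (c s) (r s) \<and>
      cball (c s) e \<subseteq> cball (c s) (r s) \<and> cball (q s) e \<inter> cball (c s) e = {}" if "length s = n" for s
  proof -
    have "q s \<noteq> c s" "dist (q s) (c s) < r s" "0 < ?m"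
      using assms that by auto
    then obtain e where "0 < e" "e \<le> ?m" "cball (q s) e \<subseteq> cball (c s) (r s)"
        "cball (c s) e \<subseteq> cball (c s) (r s)" "cball (q s) e \<inter> cball (c s) e = {}"
      by (rule cball_split_in_two)
    then show ?thesis
      by blast
  qed
  then obtain e where e: "\<And>s. length s = n \<Longrightarrow> 0 < e s \<and> e s \<le> ?m \<and>
      cball (q s) (e s) \<subseteq> cball (c s) (r s) \<and> cball (c s) (e s) \<subseteq> cball (c s) (r s) \<and>
      cball (q s) (e s) \<inter> cball (c s) (e s) = {}"
    by metis
  define c' where "c' l = (if last l then q (butlast l) else c (butlast l))" for l
  define r' where "r' l = e (butlast l)" for l
  have c'_snoc: "c' (s @ [i]) = (if i then q s else c s)" and r'_snoc: "r' (s @ [i]) = e s" for s i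
    unfolding c'_def r'_def by simp_all
  have "ball_tree_refines n c r c' r'"
    unfolding ball_tree_refines_def c'_snoc r'_snoc using e by auto
  moreover have "0 < r' (s @ [i]) \<and> r' (s @ [i]) \<le> m" if "length s = n" for s i
    unfolding r'_snoc using e[OF that] by auto
  ultimately show ?thesis
    using that c'_snoc by blast
qed

section \<open>Translation schemes\<close>

text \<open>\<open>admissible n T\<close> says that \<open>T\<close> may serve as the set of translations at stage \<open>n\<close>, and
  \<open>good n c r T\<close> that the node with centre \<open>c\<close> and radius \<open>r\<close> behaves well under all translations
  in \<open>T\<close>.\<close>

locale perfect_translation_scheme =
  fixes P B :: "real set"
    and admissible :: "nat \<Rightarrow> real set \<Rightarrow> bool"
    and good :: "nat \<Rightarrow> real \<Rightarrow> real \<Rightarrow> real set \<Rightarrow> bool"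
  assumes perfect: "perfect_set P"
    and start: "\<exists>T c r. c \<in> P \<and> 0 < r \<and> admissible 0 T \<and> good 0 c r T"
    and admissible_compact: "\<And>n T. admissible n T \<Longrightarrow> compact T \<and> T \<noteq> {}"
    and good_mono: "\<And>n c r r' T. good n c r T \<Longrightarrow> 0 < r' \<Longrightarrow> r' \<le> r \<Longrightarrow> good n c r' T"
    and refine: "\<And>n T F N. admissible n T \<Longrightarrow> finite F \<Longrightarrow>
       (\<And>c r. (c, r) \<in> F \<Longrightarrow> c \<in> P \<and> 0 < r \<and> good n c r T) \<Longrightarrow>
       \<exists>\<delta>>0. \<forall>Q. finite Q \<and> card Q \<le> N \<and> Q \<subseteq> P \<and> (\<forall>q\<in>Q. \<exists>(c, r)\<in>F. dist q c < \<delta> \<and> dist q c < r) \<longrightarrow>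
         (\<exists>T'\<subseteq>T. admissible (Suc n) T' \<and> (\<exists>\<rho>>0. \<forall>q\<in>Q. good (Suc n) q \<rho> T'))"
    and limit: "\<And>c r T x t. (\<And>n. c n \<in> P \<and> good n (c n) (r n) (T n)) \<Longrightarrow> c \<longlonglongrightarrow> x \<Longrightarrow> x \<in> P \<Longrightarrow>
       (\<And>n. dist x (c n) \<le> r n) \<Longrightarrow> (\<And>n. t \<in> T n) \<Longrightarrow> x + t \<in> B"
begin

definition stage :: "nat \<Rightarrow> real set \<Rightarrow> (bool list \<Rightarrow> real) \<Rightarrow> (bool list \<Rightarrow> real) \<Rightarrow> bool" where
  "stage n T c r \<longleftrightarrow> admissible n T \<and> (\<forall>s. length s = n \<longrightarrow> c s \<in> P \<and> 0 < r s \<and> good n (c s) (r s) T)"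

lemma stage_Suc_centres:
  assumes "stage n T c r"
  obtains q T' \<rho> where "T' \<subseteq> T" "admissible (Suc n) T'" "0 < \<rho>"
    "\<And>s. length s = n \<Longrightarrow> q s \<in> P \<and> q s \<noteq> c s \<and> dist (q s) (c s) < r s"
    "\<And>s. length s = n \<Longrightarrow> good (Suc n) (c s) \<rho> T' \<and> good (Suc n) (q s) \<rho> T'"
proof -
  define S where "S = {s :: bool list. length s = n}"
  have "finite S"
    unfolding S_def using finite_lists_length_eq[of "UNIV :: bool set" n] by simp
  have adm: "admissible n T" and node: "\<And>s. s \<in> S \<Longrightarrow> c s \<in> P \<and> 0 < r s \<and> good n (c s) (r s) T"
    using assms unfolding stage_def S_def by auto
  define F where "F = (\<lambda>s. (c s, r s)) ` S"
  have "finite F" and F_node: "\<And>a b. (a, b) \<in> F \<Longrightarrow> a \<in> P \<and> 0 < b \<and> good n a b T"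
    unfolding F_def using \<open>finite S\<close> node by auto
  then obtain \<delta> where "0 < \<delta>" and \<delta>: "\<forall>Q. finite Q \<and> card Q \<le> 2 * card S \<and> Q \<subseteq> P \<and>
      (\<forall>q\<in>Q. \<exists>(a, b)\<in>F. dist q a < \<delta> \<and> dist q a < b) \<longrightarrow>
      (\<exists>T'\<subseteq>T. admissible (Suc n) T' \<and> (\<exists>\<rho>>0. \<forall>q\<in>Q. good (Suc n) q \<rho> T'))"
    using refine[OF adm \<open>finite F\<close> F_node, where N = "2 * card S"] by blast
  have "\<exists>q\<in>P. q \<noteq> c s \<and> dist q (c s) < min \<delta> (r s)" if "s \<in> S" for s
    using perfect node[OF that] \<open>0 < \<delta>\<close> unfolding perfect_set_def islimpt_approachable
    by (metis min_less_iff_conj)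
  then obtain q where q: "\<And>s. s \<in> S \<Longrightarrow> q s \<in> P \<and> q s \<noteq> c s \<and> dist (q s) (c s) < min \<delta> (r s)"
    by metis
  define Q where "Q = c ` S \<union> q ` S"
  have "finite Q" and "Q \<subseteq> P"
    unfolding Q_def using \<open>finite S\<close> q node by auto
  have "card Q \<le> card (c ` S) + card (q ` S)"
    unfolding Q_def by (rule card_Un_le)
  also have "\<dots> \<le> card S + card S"
    using \<open>finite S\<close> by (intro add_mono card_image_le)
  finally have "card Q \<le> 2 * card S" by simp
  moreover have "\<forall>x\<in>Q. \<exists>(a, b)\<in>F. dist x a < \<delta> \<and> dist x a < b"
  proof
    fix x assume "x \<in> Q"
    then obtain s where "s \<in> S" and "x = c s \<or> x = q s"
      unfolding Q_def by blast
    then have "(c s, r s) \<in> F" and "dist x (c s) < \<delta> \<and> dist x (c s) < r s"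
      using q node \<open>0 < \<delta>\<close> unfolding F_def by auto
    then show "\<exists>(a, b)\<in>F. dist x a < \<delta> \<and> dist x a < b" by blast
  qed
  ultimately have "\<exists>T'\<subseteq>T. admissible (Suc n) T' \<and> (\<exists>\<rho>>0. \<forall>x\<in>Q. good (Suc n) x \<rho> T')"
    using \<open>finite Q\<close> \<open>Q \<subseteq> P\<close> by (intro \<delta>[rule_format]) simp
  then obtain T' \<rho> where "T' \<subseteq> T" "admissible (Suc n) T'" "0 < \<rho>"
      and good_Q: "\<And>x. x \<in> Q \<Longrightarrow> good (Suc n) x \<rho> T'"
    by blast
  show ?thesis
    by (rule that[OF \<open>T' \<subseteq> T\<close> \<open>admissible (Suc n) T'\<close> \<open>0 < \<rho>\<close>]) (use q good_Q in \<open>auto simp: S_def Q_def\<close>)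
qed

lemma stage_Suc_exists:
  assumes "stage n T c r"
  shows "\<exists>T' c' r'. T' \<subseteq> T \<and> ball_tree_refines n c r c' r' \<and> stage (Suc n) T' c' r'"
proof -
  obtain T' \<rho> q where "T' \<subseteq> T" "admissible (Suc n) T'" "0 < \<rho>"
    and q: "\<And>s. length s = n \<Longrightarrow> q s \<in> P \<and> q s \<noteq> c s \<and> dist (q s) (c s) < r s"
    and good: "\<And>s. length s = n \<Longrightarrow> good (Suc n) (c s) \<rho> T' \<and> good (Suc n) (q s) \<rho> T'"
    by (rule stage_Suc_centres[OF assms]) blast
  obtain c' r' where "ball_tree_refines n c r c' r'" and c': "\<And>s i. c' (s @ [i]) = (if i then q s else c s)"
    and r': "\<And>s i. length s = n \<Longrightarrow> 0 < r' (s @ [i]) \<and> r' (s @ [i]) \<le> \<rho>"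
    using ball_tree_refines_exists[of n q c r \<rho>] q \<open>0 < \<rho>\<close> by blast
  moreover have "stage (Suc n) T' c' r'"
    unfolding stage_def
  proof (intro conjI allI impI \<open>admissible (Suc n) T'\<close>)
    fix l :: "bool list" assume "length l = Suc n"
    then obtain s i where l: "l = s @ [i]" and s: "length s = n"
      unfolding length_Suc_conv_rev by blast
    have "c s \<in> P"
      using assms s unfolding stage_def by blast
    then show "c' l \<in> P"
      unfolding l c' using q[OF s] by simp
    show "0 < r' l"
      unfolding l using r'[OF s] by simp
    show "good (Suc n) (c' l) (r' l) T'"
      unfolding l c' using good_mono[of "Suc n" _ \<rho> T' "r' (s @ [i])"] good[OF s] r'[OF s] by simp
  qed
  ultimately show ?thesis
    using \<open>T' \<subseteq> T\<close> by blast
qed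

lemma stage_sequence_exists:
  "\<exists>T c r. \<forall>n. stage n (T n) (c n) (r n) \<and> T (Suc n) \<subseteq> T n \<and>
     ball_tree_refines n (c n) (r n) (c (Suc n)) (r (Suc n))"
proof -
  obtain T0 c0 r0 where "stage 0 T0 (\<lambda>_. c0) (\<lambda>_. r0)"
    using start unfolding stage_def by auto
  then have "\<exists>X. \<forall>n. (\<lambda>n (T, c, r). stage n T c r) n (X n) \<and>
      (\<lambda>n (T, c, r) (T', c', r'). T' \<subseteq> T \<and> ball_tree_refines n c r c' r') n (X n) (X (Suc n))"
    using stage_Suc_exists by (intro dependent_nat_choice) (auto, metis)
  then obtain X where "\<And>n. stage n (fst (X n)) (fst (snd (X n))) (snd (snd (X n))) \<and>
      fst (X (Suc n)) \<subseteq> fst (X n) \<and>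
      ball_tree_refines n (fst (snd (X n))) (snd (snd (X n))) (fst (snd (X (Suc n)))) (snd (snd (X (Suc n))))"
    by (auto simp: case_prod_beta)
  then show ?thesis
    by (intro exI[of _ "\<lambda>n. fst (X n)"] exI[of _ "\<lambda>n. fst (snd (X n))"] exI[of _ "\<lambda>n. snd (snd (X n))"]) blast
qed

theorem translate_Int_eqpoll_UNIV: "\<exists>t. (\<lambda>x. x + t) ` P \<inter> B \<approx> (UNIV :: real set)"
proof -
  obtain T c r where stage: "\<And>n. stage n (T n) (c n) (r n)" and decr: "\<And>n. T (Suc n) \<subseteq> T n"
    and refines: "\<And>n. ball_tree_refines n (c n) (r n) (c (Suc n)) (r (Suc n))"
    using stage_sequence_exists by blast
  define cen where "cen s = c (length s) s" for s
  define rad where "rad s = r (length s) s" for s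
  have node: "cen s \<in> P" "0 < rad s" "good (length s) (cen s) (rad s) (T (length s))" for s
    using stage[of "length s"] unfolding stage_def cen_def rad_def by auto
  have "\<exists>f. inj f \<and> (\<forall>b. (\<lambda>n. cen (branch b n)) \<longlonglongrightarrow> f b \<and>
      (\<forall>n. f b \<in> cball (cen (branch b n)) (rad (branch b n))))"
    using refines node(2) unfolding ball_tree_refines_def cen_def rad_def
    by (intro ball_tree_injection) (auto intro: less_imp_le)
  then obtain f where "inj f" and lim: "\<And>b. (\<lambda>n. cen (branch b n)) \<longlonglongrightarrow> f b"
    and in_ball: "\<And>b n. f b \<in> cball (cen (branch b n)) (rad (branch b n))"
    by blast
  have "\<Inter> (range T) \<noteq> {}"
  proof (rule compact_nest)
    show "compact (T n)" "T n \<noteq> {}" for n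
      using admissible_compact stage[of n] unfolding stage_def by auto
    show "T n \<subseteq> T m" if "m \<le> n" for m n
      using lift_Suc_antimono_le[of T, OF decr that] .
  qed
  then obtain t where t: "\<And>n. t \<in> T n" by blast
  have fP: "f b \<in> P" for b
    using perfect node(1) unfolding perfect_set_def
    by (intro Lim_in_closed_set[OF _ _ _ lim]) auto
  have "f b + t \<in> B" for b
  proof (rule limit[OF _ lim fP _ t])
    show "cen (branch b n) \<in> P \<and> good n (cen (branch b n)) (rad (branch b n)) (T n)" for n
      using node[of "branch b n"] by simp
    show "dist (f b) (cen (branch b n)) \<le> rad (branch b n)" for n
      using in_ball[of b n] by (simp add: dist_commute)
  qed
  moreover have "inj (\<lambda>b. f b + t)"
    using \<open>inj f\<close> by (simp add: inj_def)
  ultimately show ?thesis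
    using fP by (intro exI eqpoll_UNIV_if_Cantor_injection) auto
qed

end

section \<open>Positive Lebesgue measure\<close>

lemma compact_subset_positive_measure:
  fixes S :: "'a::euclidean_space set"
  assumes "S \<in> sets lebesgue" and "S \<notin> null_sets lebesgue"
  obtains K where "compact K" "K \<subseteq> S" "0 < measure lebesgue K"
proof -
  have "S = (\<Union>n. S \<inter> cball 0 (real n))"
    by (auto simp: real_arch_simple)
  then obtain n where "S \<inter> cball 0 (real n) \<notin> null_sets lebesgue"
    using assms(2) by (metis null_sets_UN)
  define S' where "S' = S \<inter> cball 0 (real n)"
  have S': "S' \<in> lmeasurable"
    unfolding S'_def using assms(1) by (subst Int_commute, intro fmeasurable_Int_fmeasurable) auto
  have "0 < measure lebesgue S'"
  proof -
    have "measure lebesgue S' \<noteq> 0"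
      using \<open>S \<inter> cball 0 (real n) \<notin> null_sets lebesgue\<close> S'
      by (simp add: S'_def fmeasurable_def null_sets_def emeasure_eq_measure2[OF S'[unfolded S'_def]])
    then show ?thesis
      using measure_nonneg[of lebesgue S'] by linarith
  qed
  then obtain C where C: "closed C" "C \<subseteq> S'" "S' - C \<in> lmeasurable"
      and small: "emeasure lebesgue (S' - C) < ennreal (measure lebesgue S')"
    using sets_lebesgue_inner_closed[of S' "measure lebesgue S'"] S' by (auto simp: fmeasurable_def)
  have "compact C"
    using C(1,2) unfolding S'_def
    by (meson bounded_cball bounded_subset compact_eq_bounded_closed inf.boundedE)
  moreover have "measure lebesgue (S' - C) < measure lebesgue S'"
    using C(3) small by (simp add: emeasure_eq_measure2 ennreal_less_iff)
  then have "0 < measure lebesgue C"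
    using measurable_measure_Diff[OF S' _ C(2)] \<open>closed C\<close> by simp
  ultimately show ?thesis
    using C that unfolding S'_def by blast
qed

lemma measure_Diff_translation_small:
  fixes T :: "'a::euclidean_space set"
  assumes "compact T" and "0 < e"
  obtains \<eta> where "0 < \<eta>" "\<And>h. norm h < \<eta> \<Longrightarrow> measure lebesgue (T - (+) h ` T) < e"
proof -
  have T: "T \<in> lmeasurable"
    using \<open>compact T\<close> by (rule lmeasurable_compact)
  then obtain V where "open V" "T \<subseteq> V" "V - T \<in> lmeasurable" "emeasure lebesgue (V - T) < ennreal e"
    using sets_lebesgue_outer_open[OF _ \<open>0 < e\<close>] fmeasurableD by blast
  then have "measure lebesgue (V - T) < e"
    using \<open>0 < e\<close> by (simp add: emeasure_eq_measure2 ennreal_less_iff)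
  obtain \<eta> where "0 < \<eta>" and \<eta>: "(\<Union>x\<in>T. ball x \<eta>) \<subseteq> V"
    using compact_subset_open_imp_ball_epsilon_subset[OF \<open>compact T\<close> \<open>open V\<close> \<open>T \<subseteq> V\<close>] by blast
  have "measure lebesgue (T - (+) h ` T) < e" if "norm h < \<eta>" for h
  proof -
    define Th where "Th = (+) h ` T"
    have Th: "Th \<in> lmeasurable"
      unfolding Th_def using \<open>compact T\<close> by (intro lmeasurable_compact compact_translation)
    have "Th \<subseteq> V"
      using \<eta> that by (force simp: Th_def dist_norm)
    have "measure lebesgue (T - Th) = measure lebesgue T - measure lebesgue (T \<inter> Th)"
      using measurable_measure_Diff[OF T, of "T \<inter> Th"] fmeasurableD[OF T] fmeasurableD[OF Th]
      by (simp add: Diff_Int sets.Int)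
    also have "\<dots> = measure lebesgue Th - measure lebesgue (Th \<inter> T)"
      by (simp add: Th_def measure_translation Int_commute)
    also have "\<dots> = measure lebesgue (Th - T)"
      using measurable_measure_Diff[OF Th, of "Th \<inter> T"] fmeasurableD[OF T] fmeasurableD[OF Th]
      by (simp add: Diff_Int sets.Int)
    also have "\<dots> \<le> measure lebesgue (V - T)"
      using \<open>Th \<subseteq> V\<close> \<open>V - T \<in> lmeasurable\<close> Th T
      by (intro measure_mono_fmeasurable) (auto simp: fmeasurableD sets.Diff)
    finally show ?thesis
      using \<open>measure lebesgue (V - T) < e\<close> unfolding Th_def by linarith
  qed
  with \<open>0 < \<eta>\<close> that show ?thesis by blast
qed

lemma positive_measure_Int_translates:
  fixes K T :: "'a::euclidean_space set"
  assumes "compact K" "compact T" "0 < measure lebesgue T"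
  obtains \<delta> where "0 < \<delta>"
    "\<And>Q. finite Q \<Longrightarrow> card Q \<le> N \<Longrightarrow> (\<And>q. q \<in> Q \<Longrightarrow> \<exists>c. dist q c < \<delta> \<and> (+) c ` T \<subseteq> K) \<Longrightarrow>
       0 < measure lebesgue (T \<inter> (\<Inter>q\<in>Q. (\<lambda>x. x - q) ` K))"
proof -
  have T: "T \<in> lmeasurable"
    using \<open>compact T\<close> by (rule lmeasurable_compact)
  define \<epsilon> where "\<epsilon> = measure lebesgue T / (real N + 1)"
  have "0 < \<epsilon>"
    unfolding \<epsilon>_def using assms(3) by simp
  then obtain \<eta> where "0 < \<eta>" and \<eta>: "\<And>h. norm h < \<eta> \<Longrightarrow> measure lebesgue (T - (+) h ` T) < \<epsilon>"
    using measure_Diff_translation_small[OF \<open>compact T\<close>] by blast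
  have "0 < measure lebesgue (T \<inter> (\<Inter>q\<in>Q. (\<lambda>x. x - q) ` K))"
    if "finite Q" "card Q \<le> N" and near: "\<And>q. q \<in> Q \<Longrightarrow> \<exists>c. dist q c < \<eta> \<and> (+) c ` T \<subseteq> K" for Q
  proof -
    define D where "D q = T - (\<lambda>x. x - q) ` K" for q
    have D: "D q \<in> lmeasurable" for q
      unfolding D_def using T lmeasurable_compact[OF compact_translation_subtract[OF \<open>compact K\<close>]]
      by (auto intro: fmeasurable_Diff fmeasurableD)
    have "measure lebesgue (D q) < \<epsilon>" if "q \<in> Q" for q
    proof -
      obtain c where "dist q c < \<eta>" and cT: "(+) c ` T \<subseteq> K"
        using near[OF \<open>q \<in> Q\<close>] by blast
      have "D q \<subseteq> T - (+) (c - q) ` T"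
        using cT unfolding D_def by (force simp: algebra_simps)
      then have "measure lebesgue (D q) \<le> measure lebesgue (T - (+) (c - q) ` T)"
        using D T lmeasurable_compact[OF compact_translation[OF \<open>compact T\<close>]]
        by (intro measure_mono_fmeasurable) (auto intro: fmeasurableD fmeasurable_Diff)
      also have "\<dots> < \<epsilon>"
        using \<eta> \<open>dist q c < \<eta>\<close> by (simp add: dist_norm norm_minus_commute)
      finally show ?thesis .
    qed
    then have "(\<Sum>q\<in>Q. measure lebesgue (D q)) \<le> real (card Q) * \<epsilon>"
      by (intro sum_bounded_above less_imp_le)
    then have "measure lebesgue (\<Union>q\<in>Q. D q) \<le> real (card Q) * \<epsilon>"
      using measure_UNION_le[OF \<open>finite Q\<close>, of D lebesgue] D by (meson fmeasurableD order_trans)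
    also have "\<dots> \<le> real N * \<epsilon>"
      using \<open>card Q \<le> N\<close> \<open>0 < \<epsilon>\<close> by (simp add: mult_right_mono)
    also have "\<dots> < measure lebesgue T"
      using assms(3) unfolding \<epsilon>_def by (simp add: field_simps)
    finally have "measure lebesgue (\<Union>q\<in>Q. D q) < measure lebesgue T" .
    moreover have "T \<inter> (\<Inter>q\<in>Q. (\<lambda>x. x - q) ` K) = T - (\<Union>q\<in>Q. D q)"
      unfolding D_def by auto
    moreover have "measure lebesgue (T - (\<Union>q\<in>Q. D q)) = measure lebesgue T - measure lebesgue (\<Union>q\<in>Q. D q)"
    proof (rule measurable_measure_Diff[OF T])
      show "(\<Union>q\<in>Q. D q) \<in> sets lebesgue"
        using \<open>finite Q\<close> D by (intro sets.finite_UN) (auto intro: fmeasurableD)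
    qed (auto simp: D_def)
    ultimately show ?thesis by simp
  qed
  with \<open>0 < \<eta>\<close> that show ?thesis by blast
qed

lemma nonnull_translate_Int_eqpoll_UNIV:
  assumes "perfect_set P" "P \<noteq> {}" "B \<in> sets lebesgue" "B \<notin> null_sets lebesgue"
  shows "\<exists>t. (\<lambda>x. x + t) ` P \<inter> B \<approx> (UNIV :: real set)"
proof -
  obtain K where "compact K" "K \<subseteq> B" "0 < measure lebesgue K"
    using compact_subset_positive_measure[OF assms(3,4)] by blast
  interpret perfect_translation_scheme P B "\<lambda>n T. compact T \<and> 0 < measure lebesgue T"
    "\<lambda>n c r T. (+) c ` T \<subseteq> K"
  proof
    obtain c where "c \<in> P"
      using assms(2) by blast
    moreover have "compact ((\<lambda>x. x - c) ` K) \<and> 0 < measure lebesgue ((\<lambda>x. x - c) ` K)"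
      using \<open>compact K\<close> \<open>0 < measure lebesgue K\<close>
      by (simp add: compact_translation_subtract measure_translation_subtract)
    ultimately show "\<exists>T c (r :: real). c \<in> P \<and> 0 < r \<and> (compact T \<and> 0 < measure lebesgue T) \<and> (+) c ` T \<subseteq> K"
      by (intro exI[of _ "(\<lambda>x. x - c) ` K"] exI[of _ c] exI[of _ "1::real"]) auto
  next
    fix n T and F :: "(real \<times> real) set" and N :: nat
    assume T: "compact T \<and> 0 < measure lebesgue T"
      and F: "\<And>c r. (c, r) \<in> F \<Longrightarrow> c \<in> P \<and> 0 < r \<and> (+) c ` T \<subseteq> K"
    obtain \<delta> where "0 < \<delta>" and \<delta>: "\<And>Q. finite Q \<Longrightarrow> card Q \<le> N \<Longrightarrow>
        (\<And>q. q \<in> Q \<Longrightarrow> \<exists>c. dist q c < \<delta> \<and> (+) c ` T \<subseteq> K) \<Longrightarrow>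
        0 < measure lebesgue (T \<inter> (\<Inter>q\<in>Q. (\<lambda>x. x - q) ` K))"
      using positive_measure_Int_translates[OF \<open>compact K\<close>] T by blast
    show "\<exists>\<delta>>0. \<forall>Q. finite Q \<and> card Q \<le> N \<and> Q \<subseteq> P \<and> (\<forall>q\<in>Q. \<exists>(c, r)\<in>F. dist q c < \<delta> \<and> dist q c < r) \<longrightarrow>
        (\<exists>T'\<subseteq>T. (compact T' \<and> 0 < measure lebesgue T') \<and> (\<exists>\<rho>>(0::real). \<forall>q\<in>Q. (+) q ` T' \<subseteq> K))"
    proof (intro exI[of _ \<delta>] conjI allI impI \<open>0 < \<delta>\<close>)
      fix Q assume Q: "finite Q \<and> card Q \<le> N \<and> Q \<subseteq> P \<and> (\<forall>q\<in>Q. \<exists>(c, r)\<in>F. dist q c < \<delta> \<and> dist q c < r)"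
      define T' where "T' = T \<inter> (\<Inter>q\<in>Q. (\<lambda>x. x - q) ` K)"
      have "0 < measure lebesgue T'"
        unfolding T'_def using Q F by (intro \<delta>) fastforce+
      moreover have "compact T'"
        unfolding T'_def using T \<open>compact K\<close>
        by (intro compact_Int_closed closed_INT) (auto intro: compact_imp_closed compact_translation_subtract)
      moreover have "(+) q ` T' \<subseteq> K" if "q \<in> Q" for q
        using that unfolding T'_def by auto
      ultimately show "\<exists>T'\<subseteq>T. (compact T' \<and> 0 < measure lebesgue T') \<and> (\<exists>\<rho>>(0::real). \<forall>q\<in>Q. (+) q ` T' \<subseteq> K)"
        unfolding T'_def by (intro exI[of _ T'] conjI exI[of _ 1]) (auto simp: T'_def)
    qed
  next
    fix c r :: "nat \<Rightarrow> real" and T x t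
    assume good: "\<And>n. c n \<in> P \<and> (+) (c n) ` T n \<subseteq> K" and "c \<longlonglongrightarrow> x" and t: "\<And>n. t \<in> T n"
    have "c n + t \<in> K" for n
      using good[of n] t[of n] by blast
    then have "x + t \<in> K"
      using compact_imp_closed[OF \<open>compact K\<close>] \<open>c \<longlonglongrightarrow> x\<close>
      by (intro Lim_in_closed_set[of K "\<lambda>n. c n + t"] tendsto_add) auto
    then show "x + t \<in> B"
      using \<open>K \<subseteq> B\<close> by blast
  qed (use assms(1) in auto)
  show ?thesis
    by (rule translate_Int_eqpoll_UNIV)
qed

section \<open>Meager sets and the Baire property\<close>

lemma meager_sets_subset: "A \<subseteq> M \<Longrightarrow> M \<in> meager_sets \<Longrightarrow> A \<in> meager_sets"
  unfolding meager_sets_def by blast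

lemma nowhere_dense_in_meager_sets: "nowhere_dense S \<Longrightarrow> S \<in> meager_sets"
  unfolding meager_sets_def by (intro CollectI exI[of _ "\<lambda>_. S"]) auto

lemma meager_sets_UN:
  assumes "\<And>n::nat. M n \<in> meager_sets"
  shows "(\<Union>n. M n) \<in> meager_sets"
proof -
  have "\<forall>n. \<exists>F :: nat \<Rightarrow> real set. (\<forall>k. nowhere_dense (F k)) \<and> M n \<subseteq> (\<Union>k. F k)"
    using assms unfolding meager_sets_def by blast
  then obtain F :: "nat \<Rightarrow> nat \<Rightarrow> real set"
    where F: "\<And>n k. nowhere_dense (F n k)" and cover: "\<And>n. M n \<subseteq> (\<Union>k. F n k)"
    by (metis choice)
  have "(\<Union>n. M n) \<subseteq> (\<Union>m. case_prod F (prod_decode m))"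
  proof
    fix x assume "x \<in> (\<Union>n. M n)"
    then obtain n k where "x \<in> F n k"
      using cover by blast
    then show "x \<in> (\<Union>m. case_prod F (prod_decode m))"
      by (intro UN_I[of "prod_encode (n, k)"]) simp_all
  qed
  moreover have "nowhere_dense (case_prod F (prod_decode m))" for m
    using F by (simp split: prod.split)
  ultimately show ?thesis
    unfolding meager_sets_def by (intro CollectI exI[of _ "\<lambda>m. case_prod F (prod_decode m)"]) simp
qed

lemma meager_sets_Un:
  assumes "A \<in> meager_sets" and "B \<in> meager_sets"
  shows "A \<union> B \<in> meager_sets"
proof (rule meager_sets_subset)
  show "A \<union> B \<subseteq> (\<Union>n::nat. if n = 0 then A else B)"
    by (auto intro: UN_I[of 0] UN_I[of 1])
  show "(\<Union>n::nat. if n = 0 then A else B) \<in> meager_sets"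
    using assms by (intro meager_sets_UN) simp
qed

lemma nowhere_dense_frontier_closed:
  assumes "closed S"
  shows "nowhere_dense (frontier S)"
proof -
  have "interior (frontier S) \<subseteq> interior S"
    using assms by (intro interior_mono) (simp add: frontier_def closure_closed)
  moreover have "interior (frontier S) \<subseteq> frontier S"
    by (rule interior_subset)
  ultimately have "interior (frontier S) = {}"
    unfolding frontier_def by blast
  then show ?thesis
    unfolding nowhere_dense_def by (simp add: closure_closed)
qed

definition baire_property :: "real set \<Rightarrow> bool" where
  "baire_property S \<longleftrightarrow> (\<exists>V. open V \<and> (S - V) \<union> (V - S) \<in> meager_sets)"

lemma baire_property_open: "open S \<Longrightarrow> baire_property S"
  unfolding baire_property_def by (intro exI[of _ S]) (auto intro: nowhere_dense_in_meager_sets simp: nowhere_dense_def)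

lemma baire_property_Compl:
  assumes "baire_property S"
  shows "baire_property (- S)"
proof -
  obtain V where "open V" and V: "(S - V) \<union> (V - S) \<in> meager_sets"
    using assms unfolding baire_property_def by blast
  have "(- S - interior (- V)) \<union> (interior (- V) - - S) \<subseteq> ((S - V) \<union> (V - S)) \<union> frontier (- V)"
    using interior_subset[of "- V"] by (auto simp: frontier_def closure_closed \<open>open V\<close> closed_Compl)
  moreover have "((S - V) \<union> (V - S)) \<union> frontier (- V) \<in> meager_sets"
    using \<open>open V\<close> by (intro meager_sets_Un[OF V] nowhere_dense_in_meager_sets nowhere_dense_frontier_closed) auto
  ultimately show ?thesis
    unfolding baire_property_def by (meson open_interior meager_sets_subset)
qed

lemma baire_property_UN:
  assumes "\<And>n::nat. baire_property (A n)"
  shows "baire_property (\<Union>n. A n)"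
proof -
  obtain V where "\<And>n. open (V n)" and V: "\<And>n. (A n - V n) \<union> (V n - A n) \<in> meager_sets"
    using assms unfolding baire_property_def by metis
  have "((\<Union>n. A n) - (\<Union>n. V n)) \<union> ((\<Union>n. V n) - (\<Union>n. A n)) \<subseteq> (\<Union>n. (A n - V n) \<union> (V n - A n))"
    by blast
  then show ?thesis
    unfolding baire_property_def using \<open>\<And>n. open (V n)\<close> meager_sets_UN[OF V]
    by (meson open_UN meager_sets_subset)
qed

lemma baire_property_borel:
  assumes "B \<in> sets borel"
  shows "baire_property B"
proof -
  have "B \<in> sigma_sets UNIV {S. open S}"
    using assms by (simp add: sets_borel)
  then show ?thesis
  proof induction
    case (Basic a)
    then show ?case by (simp add: baire_property_open)
  next
    case Empty
    then show ?case by (simp add: baire_property_open)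
  next
    case (Compl a)
    then show ?case
      using baire_property_Compl[of a] by (metis Compl_eq_Diff_UNIV)
  next
    case (Union a)
    then show ?case by (simp add: baire_property_UN)
  qed
qed

lemma nonmeager_borel_dense_open_layers:
  assumes "B \<in> sets borel" and "B \<notin> meager_sets"
  obtains V G where "open V" "V \<noteq> {}" "\<And>n::nat. open (G n)" "\<And>n. G n \<subseteq> V" "\<And>n. V \<subseteq> closure (G n)"
    "(\<Inter>n. G n) \<subseteq> B"
proof -
  obtain V where "open V" and "(B - V) \<union> (V - B) \<in> meager_sets"
    using baire_property_borel[OF assms(1)] unfolding baire_property_def by blast
  then obtain F :: "nat \<Rightarrow> real set" where F: "\<And>n. nowhere_dense (F n)" and cover: "(B - V) \<union> (V - B) \<subseteq> (\<Union>n. F n)"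
    unfolding meager_sets_def by blast
  have "V \<noteq> {}"
    using assms(2) meager_sets_subset[OF _ \<open>(B - V) \<union> (V - B) \<in> meager_sets\<close>, of B] by auto
  define G where "G n = V - closure (F n)" for n
  have "V \<subseteq> closure (G n)" for n
  proof -
    have "closure (- closure (F n)) = UNIV"
      using F[of n] unfolding nowhere_dense_def by (simp add: closure_complement)
    then have "V \<subseteq> V \<inter> closure (- closure (F n))"
      by simp
    also have "\<dots> \<subseteq> closure (G n)"
      unfolding G_def using open_Int_closure_subset[OF \<open>open V\<close>] by (simp add: Diff_eq)
    finally show ?thesis .
  qed
  moreover have "(\<Inter>n. G n) \<subseteq> B"
  proof
    fix x assume "x \<in> (\<Inter>n. G n)"
    then have "x \<in> V" and "\<And>n. x \<notin> F n"
      using closure_subset unfolding G_def by auto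
    then show "x \<in> B"
      using cover by blast
  qed
  moreover have "open (G n)" and "G n \<subseteq> V" for n
    unfolding G_def using \<open>open V\<close> by auto
  ultimately show ?thesis
    using that[of V G] \<open>open V\<close> \<open>V \<noteq> {}\<close> by simp
qed

lemma translate_ball_into_dense_open:
  fixes a \<tau> :: "'a::real_normed_vector"
  assumes "open G" "V \<subseteq> closure G" "(+) a ` cball \<tau> \<rho> \<subseteq> V" "0 < \<rho>"
  obtains \<tau>' \<rho>' where "0 < \<rho>'" "cball \<tau>' \<rho>' \<subseteq> cball \<tau> \<rho>" "(+) a ` cball \<tau>' \<rho>' \<subseteq> G"
proof -
  have "ball (a + \<tau>) \<rho> \<subseteq> (+) a ` cball \<tau> \<rho>"
    unfolding image_add_cball by (simp add: add.commute ball_subset_cball)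
  then have "ball (a + \<tau>) \<rho> \<inter> closure G \<noteq> {}"
    using assms(2,3,4) centre_in_ball[of "a + \<tau>" \<rho>] by blast
  then have "ball (a + \<tau>) \<rho> \<inter> G \<noteq> {}"
    by (simp add: open_Int_closure_eq_empty)
  then obtain y where y: "y \<in> ball (a + \<tau>) \<rho>" "y \<in> G"
    by blast
  then obtain e where "0 < e" "ball y e \<subseteq> G"
    using \<open>open G\<close> open_contains_ball by blast
  define d where "d = dist (a + \<tau>) y"
  have "d < \<rho>"
    using y(1) by (simp add: d_def)
  define \<rho>' where "\<rho>' = min e (\<rho> - d) / 2"
  have "0 < \<rho>'"
    using \<open>0 < e\<close> \<open>d < \<rho>\<close> unfolding \<rho>'_def by simp
  have "2 * \<rho>' \<le> e" "2 * \<rho>' \<le> \<rho> - d"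
    unfolding \<rho>'_def by (simp_all add: min_def)
  then have "\<rho>' < e" "d + \<rho>' \<le> \<rho>"
    using \<open>0 < \<rho>'\<close> by linarith+
  have "dist \<tau> (y - a) = d"
    unfolding d_def by (simp add: dist_norm algebra_simps)
  have "cball (y - a) \<rho>' \<subseteq> cball \<tau> \<rho>"
  proof
    fix t assume "t \<in> cball (y - a) \<rho>'"
    then have "dist \<tau> t \<le> d + \<rho>'"
      using dist_triangle[of \<tau> t "y - a"] \<open>dist \<tau> (y - a) = d\<close> by simp
    then show "t \<in> cball \<tau> \<rho>"
      using \<open>d + \<rho>' \<le> \<rho>\<close> by simp
  qed
  moreover have "(+) a ` cball (y - a) \<rho>' \<subseteq> G"
  proof
    fix z assume "z \<in> (+) a ` cball (y - a) \<rho>'"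
    then have "dist y z < e"
      using \<open>\<rho>' < e\<close> by auto
    then show "z \<in> G"
      using \<open>ball y e \<subseteq> G\<close> by auto
  qed
  ultimately show ?thesis
    using that \<open>0 < \<rho>'\<close> by blast
qed

lemma translates_ball_into_dense_open:
  fixes \<tau> :: "'a::real_normed_vector"
  assumes "open G" "V \<subseteq> closure G" "finite Q" "\<And>q. q \<in> Q \<Longrightarrow> (+) q ` cball \<tau> \<rho> \<subseteq> V" "0 < \<rho>"
  shows "\<exists>\<tau>' \<rho>'. 0 < \<rho>' \<and> cball \<tau>' \<rho>' \<subseteq> cball \<tau> \<rho> \<and> (\<forall>q\<in>Q. (+) q ` cball \<tau>' \<rho>' \<subseteq> G)"
  using assms(3,4)
proof (induction Q rule: finite_induct)
  case empty
  show ?case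
    using \<open>0 < \<rho>\<close> by (intro exI[of _ \<tau>] exI[of _ \<rho>]) simp
next
  case (insert a Q)
  have "\<exists>\<tau>' \<rho>'. 0 < \<rho>' \<and> cball \<tau>' \<rho>' \<subseteq> cball \<tau> \<rho> \<and> (\<forall>q\<in>Q. (+) q ` cball \<tau>' \<rho>' \<subseteq> G)"
    by (rule insert.IH) (rule insert.prems, simp)
  then obtain \<tau>1 \<rho>1 where "0 < \<rho>1" and sub: "cball \<tau>1 \<rho>1 \<subseteq> cball \<tau> \<rho>"
    and Q: "\<forall>q\<in>Q. (+) q ` cball \<tau>1 \<rho>1 \<subseteq> G"
    by blast
  have "(+) a ` cball \<tau>1 \<rho>1 \<subseteq> V"
    using insert.prems[of a] image_mono[OF sub, of "(+) a"] by simp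
  then obtain \<tau>2 \<rho>2 where "0 < \<rho>2" and sub2: "cball \<tau>2 \<rho>2 \<subseteq> cball \<tau>1 \<rho>1"
    and "(+) a ` cball \<tau>2 \<rho>2 \<subseteq> G"
    by (rule translate_ball_into_dense_open[OF assms(1,2) _ \<open>0 < \<rho>1\<close>])
  moreover have "(+) q ` cball \<tau>2 \<rho>2 \<subseteq> G" if "q \<in> Q" for q
  proof -
    have "(+) q ` cball \<tau>2 \<rho>2 \<subseteq> (+) q ` cball \<tau>1 \<rho>1"
      by (rule image_mono[OF sub2])
    also have "\<dots> \<subseteq> G"
      using Q \<open>q \<in> Q\<close> by blast
    finally show ?thesis .
  qed
  moreover have "cball \<tau>2 \<rho>2 \<subseteq> cball \<tau> \<rho>"
    using sub2 sub by (rule order_trans)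
  ultimately show ?case
    by (intro exI[of _ \<tau>2] exI[of _ \<rho>2]) simp
qed

lemma near_translates_ball_into_dense_open:
  fixes \<tau> :: "'a::euclidean_space"
  assumes "open G" "V \<subseteq> closure G" "finite Q" "\<And>q. q \<in> Q \<Longrightarrow> (+) q ` cball \<tau> \<rho> \<subseteq> V" "0 < \<rho>"
  shows "\<exists>\<tau>' \<rho>'. 0 < \<rho>' \<and> cball \<tau>' \<rho>' \<subseteq> cball \<tau> \<rho> \<and>
    (\<forall>q\<in>Q. \<forall>x. dist x q \<le> \<rho>' \<longrightarrow> (+) x ` cball \<tau>' \<rho>' \<subseteq> G)"
proof -
  obtain \<tau>' \<rho>' where "0 < \<rho>'" "cball \<tau>' \<rho>' \<subseteq> cball \<tau> \<rho>" and QG: "\<forall>q\<in>Q. (+) q ` cball \<tau>' \<rho>' \<subseteq> G"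
    using translates_ball_into_dense_open[OF assms] by blast
  \<comment> \<open>halving the radius absorbs the distance between \<open>x\<close> and \<open>q\<close>\<close>
  have "(+) x ` cball \<tau>' (\<rho>' / 2) \<subseteq> G" if "q \<in> Q" "dist x q \<le> \<rho>' / 2" for q x
  proof -
    have "cball (\<tau>' + x) (\<rho>' / 2) \<subseteq> cball (\<tau>' + q) \<rho>'"
      using that(2) by (auto simp: cball_subset_cball_iff dist_norm algebra_simps norm_minus_commute)
    then show ?thesis
      using QG \<open>q \<in> Q\<close> by auto
  qed
  moreover have "cball \<tau>' (\<rho>' / 2) \<subseteq> cball \<tau> \<rho>"
    using \<open>0 < \<rho>'\<close> \<open>cball \<tau>' \<rho>' \<subseteq> cball \<tau> \<rho>\<close> subset_cball[of "\<rho>' / 2" \<rho>' \<tau>'] by simp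
  ultimately show ?thesis
    using \<open>0 < \<rho>'\<close> by (intro exI[of _ \<tau>'] exI[of _ "\<rho>' / 2"]) auto
qed

lemma nonmeager_translate_Int_eqpoll_UNIV:
  assumes "perfect_set P" "P \<noteq> {}" "B \<in> sets borel" "B \<notin> meager_sets"
  shows "\<exists>t. (\<lambda>x. x + t) ` P \<inter> B \<approx> (UNIV :: real set)"
proof -
  obtain V and G :: "nat \<Rightarrow> real set" where "open V" "V \<noteq> {}" and G: "\<And>n. open (G n)" "\<And>n. G n \<subseteq> V" "\<And>n. V \<subseteq> closure (G n)"
    and "(\<Inter>n. G n) \<subseteq> B"
    using nonmeager_borel_dense_open_layers[OF assms(3,4)] by blast
  interpret perfect_translation_scheme P B "\<lambda>n T. \<exists>\<tau> \<rho>. 0 < \<rho> \<and> T = cball \<tau> \<rho>"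
    "\<lambda>n c r T. \<forall>x\<in>P. dist x c \<le> r \<longrightarrow> (+) x ` T \<subseteq> G n"
  proof
    obtain c g where "c \<in> P" "g \<in> V"
      using assms(2) \<open>V \<noteq> {}\<close> by blast
    then obtain e where "0 < e" "cball g e \<subseteq> V"
      using \<open>open V\<close> open_contains_cball by blast
    then have "(+) c ` cball (g - c) e \<subseteq> V"
      by simp
    then obtain \<tau> \<rho> where "0 < \<rho>" "\<forall>x. dist x c \<le> \<rho> \<longrightarrow> (+) x ` cball \<tau> \<rho> \<subseteq> G 0"
      using near_translates_ball_into_dense_open[OF G(1,3), of "{c}" "g - c" e 0] \<open>0 < e\<close> by auto
    then show "\<exists>T c r. c \<in> P \<and> 0 < r \<and> (\<exists>\<tau> \<rho>. 0 < \<rho> \<and> T = cball \<tau> \<rho>) \<and>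
        (\<forall>x\<in>P. dist x c \<le> r \<longrightarrow> (+) x ` T \<subseteq> G 0)"
      using \<open>c \<in> P\<close> by blast
  next
    fix n T and F :: "(real \<times> real) set" and N :: nat
    assume "\<exists>\<tau> \<rho>. 0 < \<rho> \<and> T = cball \<tau> \<rho>"
      and F: "\<And>c r. (c, r) \<in> F \<Longrightarrow> c \<in> P \<and> 0 < r \<and> (\<forall>x\<in>P. dist x c \<le> r \<longrightarrow> (+) x ` T \<subseteq> G n)"
    then obtain \<tau> \<rho> where "0 < \<rho>" and T: "T = cball \<tau> \<rho>"
      by blast
    have refine_Q: "\<exists>T'\<subseteq>T. (\<exists>\<tau> \<rho>. 0 < \<rho> \<and> T' = cball \<tau> \<rho>) \<and>
        (\<exists>\<rho>>0. \<forall>q\<in>Q. \<forall>x\<in>P. dist x q \<le> \<rho> \<longrightarrow> (+) x ` T' \<subseteq> G (Suc n))"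
      if "finite Q" "Q \<subseteq> P" and near: "\<forall>q\<in>Q. \<exists>(c, r)\<in>F. dist q c < r" for Q
    proof -
      have inV: "(+) q ` cball \<tau> \<rho> \<subseteq> V" if "q \<in> Q" for q
      proof -
        obtain c r where "(c, r) \<in> F" "dist q c < r"
          using near \<open>q \<in> Q\<close> by blast
        then have "(+) q ` T \<subseteq> G n"
          using F \<open>Q \<subseteq> P\<close> \<open>q \<in> Q\<close> by (meson less_imp_le subsetD)
        then show ?thesis
          using G(2)[of n] unfolding T by (rule order_trans)
      qed
      have "\<exists>\<tau>' \<rho>'. 0 < \<rho>' \<and> cball \<tau>' \<rho>' \<subseteq> cball \<tau> \<rho> \<and>
          (\<forall>q\<in>Q. \<forall>x. dist x q \<le> \<rho>' \<longrightarrow> (+) x ` cball \<tau>' \<rho>' \<subseteq> G (Suc n))"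
        by (rule near_translates_ball_into_dense_open[OF G(1,3) \<open>finite Q\<close> _ \<open>0 < \<rho>\<close>]) (rule inV)
      then obtain \<tau>' \<rho>' where "0 < \<rho>'" "cball \<tau>' \<rho>' \<subseteq> cball \<tau> \<rho>"
        and good: "\<forall>q\<in>Q. \<forall>x. dist x q \<le> \<rho>' \<longrightarrow> (+) x ` cball \<tau>' \<rho>' \<subseteq> G (Suc n)"
        by (elim exE conjE)
      show ?thesis
      proof (intro exI[of _ "cball \<tau>' \<rho>'"] conjI)
        show "cball \<tau>' \<rho>' \<subseteq> T"
          unfolding T by fact
        show "\<exists>\<tau> \<rho>. 0 < \<rho> \<and> cball \<tau>' \<rho>' = cball \<tau> \<rho>"
          using \<open>0 < \<rho>'\<close> by blast
        show "\<exists>\<rho>>0. \<forall>q\<in>Q. \<forall>x\<in>P. dist x q \<le> \<rho> \<longrightarrow> (+) x ` cball \<tau>' \<rho>' \<subseteq> G (Suc n)"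
          using good \<open>0 < \<rho>'\<close> by blast
      qed
    qed
    show "\<exists>\<delta>>0. \<forall>Q. finite Q \<and> card Q \<le> N \<and> Q \<subseteq> P \<and> (\<forall>q\<in>Q. \<exists>(c, r)\<in>F. dist q c < \<delta> \<and> dist q c < r) \<longrightarrow>
        (\<exists>T'\<subseteq>T. (\<exists>\<tau> \<rho>. 0 < \<rho> \<and> T' = cball \<tau> \<rho>) \<and>
          (\<exists>\<rho>>0. \<forall>q\<in>Q. \<forall>x\<in>P. dist x q \<le> \<rho> \<longrightarrow> (+) x ` T' \<subseteq> G (Suc n)))"
    proof (intro exI[of _ "1::real"] conjI allI impI)
      fix Q assume "finite Q \<and> card Q \<le> N \<and> Q \<subseteq> P \<and> (\<forall>q\<in>Q. \<exists>(c, r)\<in>F. dist q c < 1 \<and> dist q c < r)"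
      then show "\<exists>T'\<subseteq>T. (\<exists>\<tau> \<rho>. 0 < \<rho> \<and> T' = cball \<tau> \<rho>) \<and>
          (\<exists>\<rho>>0. \<forall>q\<in>Q. \<forall>x\<in>P. dist x q \<le> \<rho> \<longrightarrow> (+) x ` T' \<subseteq> G (Suc n))"
        by (intro refine_Q) fastforce+
    qed simp
  next
    fix c r :: "nat \<Rightarrow> real" and T x t
    assume "\<And>n. c n \<in> P \<and> (\<forall>y\<in>P. dist y (c n) \<le> r n \<longrightarrow> (+) y ` T n \<subseteq> G n)"
      and "x \<in> P" "\<And>n. dist x (c n) \<le> r n" "\<And>n. t \<in> T n"
    then have "x + t \<in> G n" for n
      by (meson image_eqI subsetD)
    then show "x + t \<in> B"
      using \<open>(\<Inter>n. G n) \<subseteq> B\<close> by blast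
  qed (use assms(1) in auto)
  show ?thesis
    by (rule translate_Int_eqpoll_UNIV)
qed

theorem mainTheorem3:
  fixes I :: "real set set" and \<A> :: "real set set" and P :: "real set"
  assumes "I = meager_sets \<or> I = null_ideal"
    and "\<A> \<subseteq> I"
    and "uncountable P" and "perfect_set P"
  shows "tiny_set I \<A> P \<longleftrightarrow>
           (\<forall>t::real. \<forall>A\<in>\<A>. countable (((\<lambda>x. x + t) ` P) \<inter> A))"
proof
  assume "tiny_set I \<A> P"
  then show "\<forall>t::real. \<forall>A\<in>\<A>. countable (((\<lambda>x. x + t) ` P) \<inter> A)"
    unfolding tiny_set_def by blast
next
  assume countable: "\<forall>t::real. \<forall>A\<in>\<A>. countable (((\<lambda>x. x + t) ` P) \<inter> A)"
  have "P \<noteq> {}"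
    using assms(3) by auto
  have "\<exists>t. (\<lambda>x. x + t) ` P \<inter> B \<approx> (UNIV :: real set)" if "B \<in> sets borel" "B \<notin> I" for B
    using assms(1)
  proof
    assume "I = meager_sets"
    then show ?thesis
      using nonmeager_translate_Int_eqpoll_UNIV[OF assms(4) \<open>P \<noteq> {}\<close>] that by simp
  next
    assume "I = null_ideal"
    moreover have "B \<in> sets lebesgue"
      using \<open>B \<in> sets borel\<close> by (metis sets_lborel sets_completionI_sets)
    ultimately show ?thesis
      using nonnull_translate_Int_eqpoll_UNIV[OF assms(4) \<open>P \<noteq> {}\<close>] that unfolding null_ideal_def by simp
  qed
  then show "tiny_set I \<A> P"
    unfolding tiny_set_def using assms(3,4) countable by blast
qed

end
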